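(* Let $X\to M$ be a Lie groupoid gerbe whose inertia bundle is a bundle of abelian groups descending to $\mathcal{A}\to M$ via the descent isomorphism $\phi\colon\Lambda X_L\to\Lambda X_R$. The following are equivalent: (1) for all $f\colon x\to y$ in $X_1$ and $\alpha\in\Lambda X_x$, $\alpha f=f\phi(\alpha)$ in $X_1$ (the left and right actions of $\Lambda X$ on $X_1$ agree); (2) the conjugation action of $X$ on $\Lambda X$, $(\alpha,f\colon x\to y)\mapsto f^{-1}\alpha f\in\Lambda X_y$, factors through the action of $\check{C}(X_0)$ on $\Lambda X$ given by $\phi$, via the projection functor $X\to\check{C}(X_0)$; i.e. $f^{-1}\alpha f=\phi(\alpha)$ for all such $f$, $\alpha$; (3) the action of $X^{\mathbf{2}}$ on $\Lambda X/\!/X$ factors, via the functor $(S,T)\colon X^{\mathbf{2}}\to X\times_MX$, through an action $\Lambda X/\!/X\times_{X,\mathrm{pr}_1}(X\times_MX)\to\Lambda X/\!/X$ of the groupoid object $X\times_MX\rightrightarrows X$ (in the category of Lie groupoids) on $\Lambda X/\!/X$, whose object component is $(\alpha\in\Lambda X_x,(x,y))\mapsto\phi(\alpha)\in\Lambda X_y$.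
   Context: Composition in $X$ is written in diagrammatic order ($fg$ means first $f$ then $g$). A Lie groupoid $X$ with $\pi\colon X_0\to M$, $\pi s=\pi t$, is a gerbe over $M$ if $\pi$ and $(s,t)\colon X_1\to X_0^{[2]}:=X_0\times_MX_0$ are surjective submersions. The inertia bundle $\Lambda X$ is the pullback of $(s,t)$ along the diagonal of $X_0$; $\Lambda X_L=\mathrm{pr}_1^*\Lambda X$, $\Lambda X_R=\mathrm{pr}_2^*\Lambda X$ over $X_0^{[2]}$. Descent to $\mathcal{A}$ means an isomorphism $\phi\colon\Lambda X_L\to\Lambda X_R$ over $X_0^{[2]}$ satisfying the cocycle condition, so $\Lambda X\cong\pi^*\mathcal{A}$. $\check{C}(X_0)$ is the Čech groupoid with arrows $X_0^{[2]}$. $\Lambda X/\!/X$ is the action groupoid of the conjugation action: objects $\Lambda X$, arrows pairs $(\alpha,g)$ with $\alpha\in\Lambda X_x$, $g\colon x\to y$, target $g^{-1}\alpha g\in\Lambda X_y$. $X^{\mathbf{2}}$ is the arrow groupoid (objects $X_1$, arrows commutative squares $g,f,h,k$ with $gk=fh$ for $g\colon x\to y$, $f\colon x\to z$, $h\colon z\to w$, $k\colon y\to w$), with source/target functors $S,T$; $X^{\mathbf{2}}\rightrightarrows X$ is a groupoid object in Lie groupoids. Its action on $\Lambda X/\!/X$ is the functor $\Lambda X/\!/X\times_{X,S}X^{\mathbf{2}}\to\Lambda X/\!/X$ given on objects by $(\alpha\in\Lambda X_x,f\colon x\to z)\mapsto f^{-1}\alpha f$ and on arrows by $((\alpha,g),\text{square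 }(g,f,h,k))\mapsto(f^{-1}\alpha f,h)$. *)

theory Defs
  imports Main
begin

text \<open>Groupoids as sets of objects and arrows. Composition is diagrammatic:
  g_cmp X f g means first f, then g (defined when target of f = source of g).\<close>

record ('o, 'a) grpd =
  g_obj :: "'o set"
  g_arr :: "'a set"
  g_src :: "'a \<Rightarrow> 'o"
  g_tgt :: "'a \<Rightarrow> 'o"
  g_cmp :: "'a \<Rightarrow> 'a \<Rightarrow> 'a"
  g_id  :: "'o \<Rightarrow> 'a"
  g_inv :: "'a \<Rightarrow> 'a"

definition is_groupoid :: "('o, 'a) grpd \<Rightarrow> bool" where
  "is_groupoid X \<longleftrightarrow>
     (\<forall>f\<in>g_arr X. g_src X f \<in> g_obj X \<and> g_tgt X f \<in> g_obj X) \<and>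
     (\<forall>f\<in>g_arr X. \<forall>g\<in>g_arr X. g_tgt X f = g_src X g \<longrightarrow>
        g_cmp X f g \<in> g_arr X \<and> g_src X (g_cmp X f g) = g_src X f \<and>
        g_tgt X (g_cmp X f g) = g_tgt X g) \<and>
     (\<forall>f\<in>g_arr X. \<forall>g\<in>g_arr X. \<forall>h\<in>g_arr X.
        g_tgt X f = g_src X g \<and> g_tgt X g = g_src X h \<longrightarrow>
        g_cmp X (g_cmp X f g) h = g_cmp X f (g_cmp X g h)) \<and>
     (\<forall>x\<in>g_obj X. g_id X x \<in> g_arr X \<and> g_src X (g_id X x) = x \<and> g_tgt X (g_id X x) = x) \<and>
     (\<forall>f\<in>g_arr X. g_cmp X (g_id X (g_src X f)) f = f \<and> g_cmp X f (g_id X (g_tgt X f)) = f) \<and>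
     (\<forall>f\<in>g_arr X. g_inv X f \<in> g_arr X \<and> g_src X (g_inv X f) = g_tgt X f \<and>
        g_tgt X (g_inv X f) = g_src X f \<and>
        g_cmp X f (g_inv X f) = g_id X (g_src X f) \<and>
        g_cmp X (g_inv X f) f = g_id X (g_tgt X f))"

definition fib2 :: "('o, 'a) grpd \<Rightarrow> ('o \<Rightarrow> 'm) \<Rightarrow> ('o \<times> 'o) set" where
  "fib2 X \<pi> = {(x, y). x \<in> g_obj X \<and> y \<in> g_obj X \<and> \<pi> x = \<pi> y}"

text \<open>Gerbe over M (set-level: surjectivity; the submersion conditions are dropped).\<close>
definition is_gerbe :: "('o, 'a) grpd \<Rightarrow> ('o \<Rightarrow> 'm) \<Rightarrow> 'm set \<Rightarrow> bool" where
  "is_gerbe X \<pi> M \<longleftrightarrow> is_groupoid X \<and> \<pi> ` g_obj X = M \<and>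
     (\<forall>f\<in>g_arr X. \<pi> (g_src X f) = \<pi> (g_tgt X f)) \<and>
     (\<lambda>f. (g_src X f, g_tgt X f)) ` g_arr X = fib2 X \<pi>"

definition inertia :: "('o, 'a) grpd \<Rightarrow> 'o \<Rightarrow> 'a set" where
  "inertia X x = {a \<in> g_arr X. g_src X a = x \<and> g_tgt X a = x}"

definition abelian_inertia :: "('o, 'a) grpd \<Rightarrow> bool" where
  "abelian_inertia X \<longleftrightarrow> (\<forall>x\<in>g_obj X. \<forall>a\<in>inertia X x. \<forall>b\<in>inertia X x.
      g_cmp X a b = g_cmp X b a)"

text \<open>Descent isomorphism phi : Lambda X_L -> Lambda X_R over X_0^{[2]}; its fibre at (x,y) is
  phi x y : Lambda X_x -> Lambda X_y, a group isomorphism; plus cocycle condition.\<close>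
definition descent_iso ::
  "('o, 'a) grpd \<Rightarrow> ('o \<Rightarrow> 'm) \<Rightarrow> ('o \<Rightarrow> 'o \<Rightarrow> 'a \<Rightarrow> 'a) \<Rightarrow> bool" where
  "descent_iso X \<pi> \<phi> \<longleftrightarrow>
     (\<forall>(x, y)\<in>fib2 X \<pi>. bij_betw (\<phi> x y) (inertia X x) (inertia X y) \<and>
        (\<forall>a\<in>inertia X x. \<forall>b\<in>inertia X x. \<phi> x y (g_cmp X a b) = g_cmp X (\<phi> x y a) (\<phi> x y b))) \<and>
     (\<forall>x y z. (x, y) \<in> fib2 X \<pi> \<and> (y, z) \<in> fib2 X \<pi> \<longrightarrow>
        (\<forall>a\<in>inertia X x. \<phi> y z (\<phi> x y a) = \<phi> x z a))"

definition conj_act :: "('o, 'a) grpd \<Rightarrow> 'a \<Rightarrow> 'a \<Rightarrow> 'a" where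
  "conj_act X \<alpha> f = g_cmp X (g_inv X f) (g_cmp X \<alpha> f)"

definition cech_act :: "('o \<Rightarrow> 'o \<Rightarrow> 'a \<Rightarrow> 'a) \<Rightarrow> 'a \<Rightarrow> 'o \<times> 'o \<Rightarrow> 'a" where
  "cech_act \<phi> \<alpha> p = \<phi> (fst p) (snd p) \<alpha>"

definition cech_proj :: "('o, 'a) grpd \<Rightarrow> 'a \<Rightarrow> 'o \<times> 'o" where
  "cech_proj X f = (g_src X f, g_tgt X f)"

definition cond1 :: "('o, 'a) grpd \<Rightarrow> ('o \<Rightarrow> 'o \<Rightarrow> 'a \<Rightarrow> 'a) \<Rightarrow> bool" where
  "cond1 X \<phi> \<longleftrightarrow> (\<forall>f\<in>g_arr X. \<forall>\<alpha>\<in>inertia X (g_src X f).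
      g_cmp X \<alpha> f = g_cmp X f (\<phi> (g_src X f) (g_tgt X f) \<alpha>))"

definition cond2 :: "('o, 'a) grpd \<Rightarrow> ('o \<Rightarrow> 'o \<Rightarrow> 'a \<Rightarrow> 'a) \<Rightarrow> bool" where
  "cond2 X \<phi> \<longleftrightarrow> (\<forall>f\<in>g_arr X. \<forall>\<alpha>\<in>inertia X (g_src X f).
      conj_act X \<alpha> f = cech_act \<phi> \<alpha> (cech_proj X f))"

text \<open>Commutative squares in X (arrows of the arrow groupoid X^2):
  (g, f, h, k) with g: x -> y, f: x -> z, h: z -> w, k: y -> w and g k = f h.
  As an arrow of X^2 it goes from object f to object k; S gives g, T gives h.\<close>
definition squares :: "('o, 'a) grpd \<Rightarrow> ('a \<times> 'a \<times> 'a \<times> 'a) set" where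
  "squares X = {(g, f, h, k). g \<in> g_arr X \<and> f \<in> g_arr X \<and> h \<in> g_arr X \<and> k \<in> g_arr X \<and>
      g_src X g = g_src X f \<and> g_tgt X f = g_src X h \<and> g_tgt X g = g_src X k \<and>
      g_tgt X h = g_tgt X k \<and> g_cmp X g k = g_cmp X f h}"

definition lx_obj :: "('o, 'a) grpd \<Rightarrow> 'a set" where
  "lx_obj X = (\<Union>x\<in>g_obj X. inertia X x)"

text \<open>Objects of the fibre product Lambda X//X \<times>_{X,pr_1} (X \<times>_M X): pairs (alpha, (x, y))
  with alpha in Lambda X_x and (x, y) in X_0^{[2]}.\<close>
definition fp_obj :: "('o, 'a) grpd \<Rightarrow> ('o \<Rightarrow> 'm) \<Rightarrow> ('a \<times> ('o \<times> 'o)) set" where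
  "fp_obj X \<pi> = {(\<alpha>, (x, y)). (x, y) \<in> fib2 X \<pi> \<and> \<alpha> \<in> inertia X x}"

text \<open>Arrows of the fibre product: ((alpha, g), (g, h)), encoded as (alpha, g, h), with
  alpha in Lambda X_{s(g)} and (g, h) an arrow of X \<times>_M X.\<close>
definition fp_arr :: "('o, 'a) grpd \<Rightarrow> ('o \<Rightarrow> 'm) \<Rightarrow> ('a \<times> 'a \<times> 'a) set" where
  "fp_arr X \<pi> = {(\<alpha>, g, h). g \<in> g_arr X \<and> h \<in> g_arr X \<and>
      \<pi> (g_src X g) = \<pi> (g_src X h) \<and> \<alpha> \<in> inertia X (g_src X g)}"

text \<open>(A0, A1) is an action of the groupoid object X \<times>_M X \<rightrightarrows> X on Lambda X // X:
  A0 is the object component, A1 the arrow component (arrows of Lambda X//X are pairs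
  (alpha, g) with alpha in Lambda X_{s(g)}, from alpha to g^{-1} alpha g).\<close>
definition is_fp_action ::
  "('o, 'a) grpd \<Rightarrow> ('o \<Rightarrow> 'm) \<Rightarrow> ('a \<times> ('o \<times> 'o) \<Rightarrow> 'a) \<Rightarrow> ('a \<times> 'a \<times> 'a \<Rightarrow> 'a \<times> 'a) \<Rightarrow> bool" where
  "is_fp_action X \<pi> A0 A1 \<longleftrightarrow>
    \<comment> \<open>functor: objects to objects, with anchor compatibility pr_2\<close>
    (\<forall>(\<alpha>, (x, y))\<in>fp_obj X \<pi>. A0 (\<alpha>, (x, y)) \<in> inertia X y) \<and>
    \<comment> \<open>functor: arrows to arrows with correct source/target, anchor compatibility pr_2\<close>
    (\<forall>(\<alpha>, g, h)\<in>fp_arr X \<pi>.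
       snd (A1 (\<alpha>, g, h)) = h \<and>
       fst (A1 (\<alpha>, g, h)) = A0 (\<alpha>, (g_src X g, g_src X h)) \<and>
       conj_act X (fst (A1 (\<alpha>, g, h))) h =
         A0 (conj_act X \<alpha> g, (g_tgt X g, g_tgt X h))) \<and>
    \<comment> \<open>functor: identities\<close>
    (\<forall>(\<alpha>, (x, y))\<in>fp_obj X \<pi>.
       A1 (\<alpha>, g_id X x, g_id X y) = (A0 (\<alpha>, (x, y)), g_id X y)) \<and>
    \<comment> \<open>functor: composition\<close>
    (\<forall>(\<alpha>, g, h)\<in>fp_arr X \<pi>. \<forall>g'\<in>g_arr X. \<forall>h'\<in>g_arr X.
       g_src X g' = g_tgt X g \<and> g_src X h' = g_tgt X h \<longrightarrow>
       A1 (\<alpha>, g_cmp X g g', g_cmp X h h') =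
         (fst (A1 (\<alpha>, g, h)),
          g_cmp X (snd (A1 (\<alpha>, g, h))) (snd (A1 (conj_act X \<alpha> g, g', h'))))) \<and>
    \<comment> \<open>unit law (unit of X \<times>_M X \<rightrightarrows> X is the diagonal)\<close>
    (\<forall>x\<in>g_obj X. \<forall>\<alpha>\<in>inertia X x. A0 (\<alpha>, (x, x)) = \<alpha>) \<and>
    (\<forall>g\<in>g_arr X. \<forall>\<alpha>\<in>inertia X (g_src X g). A1 (\<alpha>, g, g) = (\<alpha>, g)) \<and>
    \<comment> \<open>associativity (composition in X \<times>_M X \<rightrightarrows> X: ((x,y),(y,z)) \<mapsto> (x,z))\<close>
    (\<forall>x y z. (x, y) \<in> fib2 X \<pi> \<and> (y, z) \<in> fib2 X \<pi> \<longrightarrow>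
       (\<forall>\<alpha>\<in>inertia X x. A0 (A0 (\<alpha>, (x, y)), (y, z)) = A0 (\<alpha>, (x, z)))) \<and>
    (\<forall>(\<alpha>, g, h)\<in>fp_arr X \<pi>. \<forall>k\<in>g_arr X. \<pi> (g_src X h) = \<pi> (g_src X k) \<longrightarrow>
       A1 (fst (A1 (\<alpha>, g, h)), h, k) = A1 (\<alpha>, g, k))"

text \<open>Condition (3): the action of X^2 on Lambda X//X (objects (alpha, f) \<mapsto> f^{-1} alpha f,
  arrows ((alpha, g), (g, f, h, k)) \<mapsto> (f^{-1} alpha f, h)) factors through
  id \<times> (S,T) : Lambda X//X \<times>_{X,S} X^2 \<rightarrow> Lambda X//X \<times>_{X,pr_1} (X \<times>_M X)
  (objects (alpha, f) \<mapsto> (alpha, (s f, t f)), arrows ((alpha,g),(g,f,h,k)) \<mapsto> (alpha, g, h))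
  via an action of X \<times>_M X \<rightrightarrows> X whose object component is (alpha,(x,y)) \<mapsto> phi(alpha).\<close>
definition cond3 ::
  "('o, 'a) grpd \<Rightarrow> ('o \<Rightarrow> 'm) \<Rightarrow> ('o \<Rightarrow> 'o \<Rightarrow> 'a \<Rightarrow> 'a) \<Rightarrow> bool" where
  "cond3 X \<pi> \<phi> \<longleftrightarrow> (\<exists>A0 A1. is_fp_action X \<pi> A0 A1 \<and>
     (\<forall>(\<alpha>, (x, y))\<in>fp_obj X \<pi>. A0 (\<alpha>, (x, y)) = \<phi> x y \<alpha>) \<and>
     (\<forall>f\<in>g_arr X. \<forall>\<alpha>\<in>inertia X (g_src X f).
        A0 (\<alpha>, (g_src X f, g_tgt X f)) = conj_act X \<alpha> f) \<and>
     (\<forall>(g, f, h, k)\<in>squares X. \<forall>\<alpha>\<in>inertia X (g_src X g).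
        A1 (\<alpha>, g, h) = (conj_act X \<alpha> f, h)))"

end

theory Submission
  imports Defs
begin

text \<open>Condition (1) says \<open>\<alpha> f = f \<phi>(\<alpha>)\<close>, which in a groupoid is the same as
  \<open>f\<inverse> \<alpha> f = \<phi>(\<alpha>)\<close>, i.e. condition (2). Under (2) the descent isomorphism \<open>\<phi>\<close> itself
  defines the action of \<open>X \<times>\<^sub>M X \<rightrightarrows> X\<close> on \<open>\<Lambda>X//X\<close>: on objects
  \<open>(\<alpha>, (x, y)) \<mapsto> \<phi>\<^sub>x\<^sub>y(\<alpha>)\<close>, on arrows \<open>(\<alpha>, g, h) \<mapsto> (\<phi>(\<alpha>), h)\<close>. The unit and
  associativity laws are the normalisation and the cocycle condition of \<open>\<phi>\<close>, and
  functoriality is the cocycle condition combined with (2). Conversely, the object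
  component required by (3) agrees both with \<open>\<phi>\<close> and with conjugation, which is (2).\<close>

lemma groupoid_src_tgt_in_obj:
  assumes "is_groupoid X" "f \<in> g_arr X"
  shows "g_src X f \<in> g_obj X" "g_tgt X f \<in> g_obj X"
  using assms unfolding is_groupoid_def by auto

lemma groupoid_cmp:
  assumes "is_groupoid X" "f \<in> g_arr X" "g \<in> g_arr X" "g_tgt X f = g_src X g"
  shows "g_cmp X f g \<in> g_arr X" "g_src X (g_cmp X f g) = g_src X f"
    "g_tgt X (g_cmp X f g) = g_tgt X g"
  using assms unfolding is_groupoid_def by auto

lemma groupoid_assoc:
  assumes "is_groupoid X" "f \<in> g_arr X" "g \<in> g_arr X" "h \<in> g_arr X"
    "g_tgt X f = g_src X g" "g_tgt X g = g_src X h"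
  shows "g_cmp X (g_cmp X f g) h = g_cmp X f (g_cmp X g h)"
  using assms unfolding is_groupoid_def by blast

lemma groupoid_id:
  assumes "is_groupoid X" "x \<in> g_obj X"
  shows "g_id X x \<in> g_arr X" "g_src X (g_id X x) = x" "g_tgt X (g_id X x) = x"
  using assms unfolding is_groupoid_def by auto

lemma groupoid_id_cmp:
  assumes "is_groupoid X" "f \<in> g_arr X"
  shows "g_cmp X (g_id X (g_src X f)) f = f" "g_cmp X f (g_id X (g_tgt X f)) = f"
  using assms unfolding is_groupoid_def by auto

lemma groupoid_inv:
  assumes "is_groupoid X" "f \<in> g_arr X"
  shows "g_inv X f \<in> g_arr X" "g_src X (g_inv X f) = g_tgt X f"
    "g_tgt X (g_inv X f) = g_src X f"
    "g_cmp X f (g_inv X f) = g_id X (g_src X f)"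
    "g_cmp X (g_inv X f) f = g_id X (g_tgt X f)"
  using assms unfolding is_groupoid_def by auto

lemma cmp_eq_cmp_iff_conj_act_eq:
  assumes G: "is_groupoid X" and f: "f \<in> g_arr X"
    and a: "a \<in> inertia X (g_src X f)" and b: "b \<in> inertia X (g_tgt X f)"
  shows "g_cmp X a f = g_cmp X f b \<longleftrightarrow> conj_act X a f = b"
proof
  have b_arr: "b \<in> g_arr X" "g_src X b = g_tgt X f"
    using b unfolding inertia_def by auto
  assume "g_cmp X a f = g_cmp X f b"
  then have "conj_act X a f = g_cmp X (g_inv X f) (g_cmp X f b)"
    unfolding conj_act_def by simp
  also have "\<dots> = g_cmp X (g_cmp X (g_inv X f) f) b"
    using groupoid_assoc[OF G _ f b_arr(1), of "g_inv X f"] groupoid_inv[OF G f] b_arr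
    by simp
  also have "\<dots> = b"
    using groupoid_inv[OF G f] groupoid_id_cmp(1)[OF G b_arr(1)] b_arr by simp
  finally show "conj_act X a f = b" .
next
  have a_arr: "a \<in> g_arr X" "g_tgt X a = g_src X f"
    using a unfolding inertia_def by auto
  have af: "g_cmp X a f \<in> g_arr X" "g_src X (g_cmp X a f) = g_src X f"
    using groupoid_cmp[OF G a_arr(1) f] a a_arr unfolding inertia_def by auto
  assume conj: "conj_act X a f = b"
  have "g_cmp X a f = g_cmp X (g_cmp X f (g_inv X f)) (g_cmp X a f)"
    using groupoid_id_cmp(1)[OF G af(1)] groupoid_inv[OF G f] af by simp
  also have "\<dots> = g_cmp X f (g_cmp X (g_inv X f) (g_cmp X a f))"
    using groupoid_assoc[OF G f groupoid_inv(1)[OF G f] af(1)] groupoid_inv[OF G f] af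
    by simp
  also have "\<dots> = g_cmp X f b"
    using conj unfolding conj_act_def by simp
  finally show "g_cmp X a f = g_cmp X f b" .
qed

locale gerbe_descent =
  fixes X :: "('o, 'a) grpd" and \<pi> :: "'o \<Rightarrow> 'm" and \<phi> :: "'o \<Rightarrow> 'o \<Rightarrow> 'a \<Rightarrow> 'a"
  assumes groupoid: "is_groupoid X"
    and fibred: "\<And>f. f \<in> g_arr X \<Longrightarrow> \<pi> (g_src X f) = \<pi> (g_tgt X f)"
    and descent: "descent_iso X \<pi> \<phi>"
begin

lemma src_tgt_in_fib2: "f \<in> g_arr X \<Longrightarrow> (g_src X f, g_tgt X f) \<in> fib2 X \<pi>"
  using groupoid_src_tgt_in_obj[OF groupoid] fibred unfolding fib2_def by simp

lemma descent_bij: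
  "(x, y) \<in> fib2 X \<pi> \<Longrightarrow> bij_betw (\<phi> x y) (inertia X x) (inertia X y)"
  using descent unfolding descent_iso_def by auto

lemma descent_in_inertia:
  "(x, y) \<in> fib2 X \<pi> \<Longrightarrow> a \<in> inertia X x \<Longrightarrow> \<phi> x y a \<in> inertia X y"
  using descent_bij bij_betwE by blast

lemma descent_cocycle:
  "(x, y) \<in> fib2 X \<pi> \<Longrightarrow> (y, z) \<in> fib2 X \<pi> \<Longrightarrow> a \<in> inertia X x \<Longrightarrow>
    \<phi> y z (\<phi> x y a) = \<phi> x z a"
  using descent unfolding descent_iso_def by blast

text \<open>The cocycle condition on \<open>(x, x, x)\<close> makes \<open>\<phi>\<^sub>x\<^sub>x\<close> idempotent, and it is injective.\<close>

lemma descent_diag: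
  assumes x: "x \<in> g_obj X" and a: "a \<in> inertia X x"
  shows "\<phi> x x a = a"
proof -
  have xx: "(x, x) \<in> fib2 X \<pi>" using x unfolding fib2_def by simp
  have "\<phi> x x (\<phi> x x a) = \<phi> x x a" using descent_cocycle[OF xx xx a] .
  moreover have "inj_on (\<phi> x x) (inertia X x)"
    using descent_bij[OF xx] bij_betw_imp_inj_on by blast
  ultimately show ?thesis using descent_in_inertia[OF xx a] a inj_onD by metis
qed

lemma cond1_iff_cond2: "cond1 X \<phi> \<longleftrightarrow> cond2 X \<phi>"
  unfolding cond1_def cond2_def cech_act_def cech_proj_def
  using cmp_eq_cmp_iff_conj_act_eq[OF groupoid]
    descent_in_inertia[OF src_tgt_in_fib2] by auto

lemma cond2_conj_act:
  "cond2 X \<phi> \<Longrightarrow> f \<in> g_arr X \<Longrightarrow> a \<in> inertia X (g_src X f) \<Longrightarrow>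
    conj_act X a f = \<phi> (g_src X f) (g_tgt X f) a"
  unfolding cond2_def cech_act_def cech_proj_def by auto

lemma cond2_conj_act_descent:
  assumes c2: "cond2 X \<phi>" and g: "g \<in> g_arr X" and h: "h \<in> g_arr X"
    and gh: "\<pi> (g_src X g) = \<pi> (g_src X h)" and a: "a \<in> inertia X (g_src X g)"
  shows "conj_act X (\<phi> (g_src X g) (g_src X h) a) h
    = \<phi> (g_tgt X g) (g_tgt X h) (conj_act X a g)"
proof -
  have sgsh: "(g_src X g, g_src X h) \<in> fib2 X \<pi>"
    using groupoid_src_tgt_in_obj[OF groupoid] g h gh unfolding fib2_def by simp
  have shth: "(g_src X h, g_tgt X h) \<in> fib2 X \<pi>" and sgtg: "(g_src X g, g_tgt X g) \<in> fib2 X \<pi>"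
    using src_tgt_in_fib2 g h by auto
  then have tgth: "(g_tgt X g, g_tgt X h) \<in> fib2 X \<pi>"
    using sgsh unfolding fib2_def by auto
  have "conj_act X (\<phi> (g_src X g) (g_src X h) a) h
      = \<phi> (g_src X h) (g_tgt X h) (\<phi> (g_src X g) (g_src X h) a)"
    using cond2_conj_act[OF c2 h] descent_in_inertia[OF sgsh a] by simp
  also have "\<dots> = \<phi> (g_src X g) (g_tgt X h) a"
    using descent_cocycle[OF sgsh shth a] .
  also have "\<dots> = \<phi> (g_tgt X g) (g_tgt X h) (\<phi> (g_src X g) (g_tgt X g) a)"
    using descent_cocycle[OF sgtg tgth a] by simp
  also have "\<dots> = \<phi> (g_tgt X g) (g_tgt X h) (conj_act X a g)"
    using cond2_conj_act[OF c2 g a] by simp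
  finally show ?thesis .
qed

definition descent_action_obj :: "'a \<times> ('o \<times> 'o) \<Rightarrow> 'a" where
  "descent_action_obj = (\<lambda>(a, (x, y)). \<phi> x y a)"

definition descent_action_arr :: "'a \<times> 'a \<times> 'a \<Rightarrow> 'a \<times> 'a" where
  "descent_action_arr = (\<lambda>(a, g, h). (\<phi> (g_src X g) (g_src X h) a, h))"

lemma is_fp_action_descent:
  assumes "cond2 X \<phi>"
  shows "is_fp_action X \<pi> descent_action_obj descent_action_arr"
  unfolding is_fp_action_def
proof (intro conjI)
  show "\<forall>(\<alpha>, g, h)\<in>fp_arr X \<pi>.
      snd (descent_action_arr (\<alpha>, g, h)) = h \<and>
      fst (descent_action_arr (\<alpha>, g, h)) = descent_action_obj (\<alpha>, (g_src X g, g_src X h)) \<and>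
      conj_act X (fst (descent_action_arr (\<alpha>, g, h))) h =
        descent_action_obj (conj_act X \<alpha> g, (g_tgt X g, g_tgt X h))"
    unfolding fp_arr_def descent_action_obj_def descent_action_arr_def
    using cond2_conj_act_descent[OF assms] by auto
qed (auto simp: fp_obj_def fp_arr_def fib2_def descent_action_obj_def descent_action_arr_def
  groupoid_id[OF groupoid] groupoid_cmp[OF groupoid] groupoid_src_tgt_in_obj[OF groupoid]
  descent_in_inertia descent_cocycle descent_diag)

lemma cond2_imp_cond3:
  assumes "cond2 X \<phi>"
  shows "cond3 X \<pi> \<phi>"
  unfolding cond3_def
proof (intro exI conjI)
  show "is_fp_action X \<pi> descent_action_obj descent_action_arr"
    using is_fp_action_descent[OF assms] .
qed (auto simp: descent_action_obj_def descent_action_arr_def squares_def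
  cond2_conj_act[OF assms])

lemma cond3_imp_cond2:
  assumes "cond3 X \<pi> \<phi>"
  shows "cond2 X \<phi>"
proof -
  from assms obtain A0 A1 where
    phi: "\<forall>(\<alpha>, (x, y))\<in>fp_obj X \<pi>. A0 (\<alpha>, (x, y)) = \<phi> x y \<alpha>" and
    conj: "\<forall>f\<in>g_arr X. \<forall>\<alpha>\<in>inertia X (g_src X f).
      A0 (\<alpha>, (g_src X f, g_tgt X f)) = conj_act X \<alpha> f"
    unfolding cond3_def by blast
  have "(\<alpha>, (g_src X f, g_tgt X f)) \<in> fp_obj X \<pi>"
    if "f \<in> g_arr X" "\<alpha> \<in> inertia X (g_src X f)" for f \<alpha>
    using src_tgt_in_fib2 that unfolding fp_obj_def by simp
  then show ?thesis
    using phi conj unfolding cond2_def cech_act_def cech_proj_def by fastforce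
qed

end

theorem lemma6p5:
  fixes X :: "('o, 'a) grpd" and \<pi> :: "'o \<Rightarrow> 'm" and M :: "'m set"
    and \<phi> :: "'o \<Rightarrow> 'o \<Rightarrow> 'a \<Rightarrow> 'a"
  assumes "is_gerbe X \<pi> M"
    and "abelian_inertia X"
    and "descent_iso X \<pi> \<phi>"
  shows "(cond1 X \<phi> \<longleftrightarrow> cond2 X \<phi>) \<and> (cond2 X \<phi> \<longleftrightarrow> cond3 X \<pi> \<phi>)"
proof -
  interpret gerbe_descent X \<pi> \<phi>
    using assms(1,3) unfolding is_gerbe_def by unfold_locales auto
  show ?thesis
    using cond1_iff_cond2 cond2_imp_cond3 cond3_imp_cond2 by blast
qed

end
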